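(* Let $H=\{\lambda\in B_{1/\sqrt2}(0):\ \mathrm{Re}(\lambda)>0,\ \mathrm{Im}(\lambda)>0\}\setminus B_{2/3}(1/3)$. Then $$\mathcal M\cap \mathrm{int}(H)\subset \mathrm{clos}(\mathrm{int}(\mathcal M)),$$ i.e. every point of $\mathcal M$ lying in the interior of $H$ is a limit of interior points of $\mathcal M$.
   Context: $\mathbb D=\{z\in\mathbb C:|z|<1\}$; $B_r(z_0)$ denotes the open disc of radius $r$ centered at $z_0$. For $\lambda\in\mathbb D$, $A_\lambda=\{\sum_{n\ge0}a_n\lambda^n: a_n\in\{-1,1\}\}$ is the attractor of the iterated function system $\{\lambda z-1,\lambda z+1\}$ on $\mathbb C$. $\mathcal M=\{\lambda\in\mathbb D: A_\lambda \text{ is connected}\}$; equivalently $\mathcal M=\{\lambda\in\mathbb D:\ \exists (a_k)_{k\ge1},\ a_k\in\{-1,0,1\},\ 1+\sum_{k\ge1}a_k\lambda^k=0\}$. $\mathrm{int}$ and $\mathrm{clos}$ denote interior and closure in $\mathbb C$. *)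

theory Defs
  imports "HOL-Analysis.Analysis"
begin

definition attractor :: "complex \<Rightarrow> complex set" where
  "attractor l = {(\<Sum>n. complex_of_int (a n) * l ^ n) | a. \<forall>n. a n \<in> {-1, 1}}"

definition connLocus :: "complex set" where
  "connLocus = {l. norm l < 1 \<and> connected (attractor l)}"

definition regionH :: "complex set" where
  "regionH = {l. l \<in> ball 0 (1 / sqrt 2) \<and> Re l > 0 \<and> Im l > 0} - ball (1/3) (2/3)"

end

theory Submission
  imports Defs "HOL-Complex_Analysis.Complex_Analysis"
begin

text \<open>
  The attractor \<open>A\<close> of \<open>z \<mapsto> \<mu> z - 1, \<mu> z + 1\<close> is the intersection of nested compact sets,
  each the union of the two images of its predecessor; hence \<open>A\<close> is connected iff its two pieces
  \<open>\<mu> A - 1\<close> and \<open>\<mu> A + 1\<close> meet, i.e. iff \<open>1/\<mu>\<close> has an expansion \<open>\<Sum> c\<^sub>n \<mu>\<^sup>n\<close> with digits in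
  \<open>{-1, 0, 1}\<close>. For \<open>\<mu> \<in> H\<close> a parallelogram containing the disc of radius \<open>1/4\<close> is mapped into itself
  by the expansion map \<open>z \<mapsto> (z - d)/\<mu>\<close> for a suitable digit \<open>d\<close>, so all its points have such
  expansions. Consequently \<open>\<mu> \<in> M\<close> as soon as a truncation \<open>P\<^sub>N(\<mu>) = (\<Sum>n<N. c\<^sub>n \<mu>\<^sup>n\<^sup>+\<^sup>1)\<close>
  satisfies \<open>|1 - P\<^sub>N(\<mu>)| < |\<mu>|\<^sup>N\<^sup>+\<^sup>1/4\<close>, an open condition that holds wherever \<open>P\<^sub>N = 1\<close>.
  Finally, for \<open>\<lambda> \<in> M \<inter> int H\<close> with digits \<open>c\<close>, the polynomials \<open>1 - P\<^sub>N\<close> converge locally uniformly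
  to \<open>1 - \<Sum> c\<^sub>n z\<^sup>n\<^sup>+\<^sup>1\<close>, which vanishes at \<open>\<lambda>\<close> but not at \<open>0\<close>; by Hurwitz's theorem \<open>P\<^sub>N = 1\<close> has
  solutions arbitrarily close to \<open>\<lambda>\<close>, and they lie in \<open>int M\<close>.
\<close>

lemma Inter_Un_decseq:
  assumes "decseq A" and "decseq B"
  shows "(\<Inter>n. A n \<union> B n) = (\<Inter>n. A n) \<union> (\<Inter>n. B n)"
proof (intro equalityI subsetI)
  fix x assume x: "x \<in> (\<Inter>n. A n \<union> B n)"
  show "x \<in> (\<Inter>n. A n) \<union> (\<Inter>n. B n)"
  proof (cases "x \<in> (\<Inter>n. A n)")
    case False
    then obtain m where m: "x \<notin> A m" by blast
    have "x \<in> B n" for n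
    proof -
      have "x \<notin> A (max m n)"
        using m decseqD[OF assms(1), of m "max m n"] by auto
      then have "x \<in> B (max m n)"
        using x by blast
      then show ?thesis
        using decseqD[OF assms(2), of n "max m n"] by auto
    qed
    then show ?thesis by blast
  qed simp
qed auto

lemma image_Inter_decseq_compact:
  fixes f :: "'a::heine_borel \<Rightarrow> 'b::t2_space"
  assumes "continuous_on UNIV f" and "\<And>n. compact (K n)" and "decseq K"
  shows "f ` (\<Inter>n. K n) = (\<Inter>n. f ` K n)"
proof (intro equalityI subsetI)
  fix y assume y: "y \<in> (\<Inter>n. f ` K n)"
  have "closed (f -` {y})"
    using assms(1) by (simp add: continuous_on_closed_vimage)
  then have "compact (K n \<inter> f -` {y})" for n
    using assms(2) by (rule compact_Int_closed[rotated])
  moreover have "K n \<inter> f -` {y} \<noteq> {}" for n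
    using y by blast
  moreover have "K n \<inter> f -` {y} \<subseteq> K m \<inter> f -` {y}" if "m \<le> n" for m n
    using decseqD[OF assms(3) that] by blast
  ultimately have "(\<Inter>n. K n \<inter> f -` {y}) \<noteq> {}"
    by (rule compact_nest)
  then show "y \<in> f ` (\<Inter>n. K n)"
    by blast
qed blast

section \<open>Digit expansions\<close>

definition has_digit_expansion :: "int set \<Rightarrow> complex \<Rightarrow> complex \<Rightarrow> bool" where
  "has_digit_expansion D \<mu> z \<longleftrightarrow> (\<exists>e. (\<forall>n. e n \<in> D) \<and> (\<lambda>n. of_int (e n) * \<mu> ^ n) sums z)"

lemma has_digit_expansion_Cons:
  assumes "d \<in> D" and "has_digit_expansion D \<mu> z"
  shows "has_digit_expansion D \<mu> (of_int d + \<mu> * z)"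
proof -
  obtain e where e: "\<forall>n. e n \<in> D" and sums: "(\<lambda>n. of_int (e n) * \<mu> ^ n) sums z"
    using assms(2) unfolding has_digit_expansion_def by blast
  have "(\<lambda>n. of_int (case_nat d e (Suc n)) * \<mu> ^ Suc n) sums (\<mu> * z)"
    using sums_mult[OF sums, of \<mu>] by (simp add: mult_ac)
  then have "(\<lambda>n. of_int (case_nat d e n) * \<mu> ^ n) sums (\<mu> * z + of_int (case_nat d e 0) * \<mu> ^ 0)"
    by (rule sums_Suc_iff[THEN iffD1])
  moreover have "\<forall>n. case_nat d e n \<in> D"
    using assms(1) e by (simp split: nat.split)
  ultimately show ?thesis
    unfolding has_digit_expansion_def by (intro exI[of _ "case_nat d e"]) (simp add: add.commute)
qed

lemma has_digit_expansion_uncons: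
  assumes "has_digit_expansion D \<mu> z"
  obtains d z' where "d \<in> D" "has_digit_expansion D \<mu> z'" "z = of_int d + \<mu> * z'"
proof -
  obtain e where e: "\<forall>n. e n \<in> D" and sums: "(\<lambda>n. of_int (e n) * \<mu> ^ n) sums z"
    using assms unfolding has_digit_expansion_def by blast
  have tail: "(\<lambda>n. \<mu> * (of_int (e (Suc n)) * \<mu> ^ n)) sums (z - of_int (e 0))"
    using sums_Suc_iff[of "\<lambda>n. of_int (e n) * \<mu> ^ n"] sums by (simp add: mult_ac)
  obtain z' where z': "(\<lambda>n. of_int (e (Suc n)) * \<mu> ^ n) sums z'" "z = of_int (e 0) + \<mu> * z'"
  proof (cases "\<mu> = 0")
    case True
    have "(\<lambda>n. of_int (e n) * \<mu> ^ n) sums of_int (e 0)"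
      unfolding True by (rule powser_sums_zero)
    with sums have z: "z = of_int (e 0)"
      by (rule sums_unique2)
    have "(\<lambda>n. of_int (e (Suc n)) * \<mu> ^ n) sums of_int (e (Suc 0))"
      unfolding True by (rule powser_sums_zero)
    then show ?thesis
      by (rule that) (simp add: z True)
  next
    case False
    have "(\<lambda>n. of_int (e (Suc n)) * \<mu> ^ n) sums ((z - of_int (e 0)) / \<mu>)"
      using sums_divide[OF tail, of \<mu>] False by simp
    then show ?thesis
      by (rule that) (use False in simp)
  qed
  have "has_digit_expansion D \<mu> z'"
    unfolding has_digit_expansion_def using e z'(1) by (intro exI[of _ "\<lambda>n. e (Suc n)"]) simp
  with e z'(2) show ?thesis
    by (intro that) auto
qed

lemma has_digit_expansion_prepend:
  assumes "\<And>n. n < N \<Longrightarrow> c n \<in> D" and "has_digit_expansion D \<mu> w"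
  shows "has_digit_expansion D \<mu> ((\<Sum>n<N. of_int (c n) * \<mu> ^ n) + \<mu> ^ N * w)"
  using assms(1)
proof (induction N arbitrary: c)
  case 0
  then show ?case using assms(2) by simp
next
  case (Suc N)
  have "has_digit_expansion D \<mu> ((\<Sum>n<N. of_int (c (Suc n)) * \<mu> ^ n) + \<mu> ^ N * w)"
    using Suc by simp
  then have "has_digit_expansion D \<mu> (of_int (c 0) + \<mu> * ((\<Sum>n<N. of_int (c (Suc n)) * \<mu> ^ n) + \<mu> ^ N * w))"
    using Suc.prems by (intro has_digit_expansion_Cons) auto
  moreover have "of_int (c 0) + \<mu> * ((\<Sum>n<N. of_int (c (Suc n)) * \<mu> ^ n) + \<mu> ^ N * w) =
      (\<Sum>n<Suc N. of_int (c n) * \<mu> ^ n) + \<mu> ^ Suc N * w"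
    by (simp add: sum.lessThan_Suc_shift sum_distrib_left algebra_simps del: sum.lessThan_Suc)
  ultimately show ?case by simp
qed

lemma digit_series_summable:
  fixes \<mu> :: complex and a :: "nat \<Rightarrow> int"
  assumes "norm \<mu> < 1" and "\<And>n. \<bar>a n\<bar> \<le> 1"
  shows "summable (\<lambda>n. of_int (a n) * \<mu> ^ n)"
    and "norm (\<Sum>n. of_int (a n) * \<mu> ^ n) \<le> 1 / (1 - norm \<mu>)"
proof -
  have le: "norm (of_int (a n) * \<mu> ^ n) \<le> norm \<mu> ^ n" for n
  proof -
    have "norm (of_int (a n) :: complex) \<le> 1"
      using assms(2)[of n] by (simp only: norm_of_int)
    then show ?thesis by (simp add: norm_mult norm_power mult_left_le_one_le)
  qed
  have geom: "summable (\<lambda>n. norm \<mu> ^ n)"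
    using assms(1) by (simp add: summable_geometric)
  show "summable (\<lambda>n. of_int (a n) * \<mu> ^ n)"
    by (rule summable_comparison_test[OF _ geom]) (use le in auto)
  have "norm (\<Sum>n. of_int (a n) * \<mu> ^ n) \<le> (\<Sum>n. norm \<mu> ^ n)"
    by (rule norm_suminf_le[OF le geom])
  also have "\<dots> = 1 / (1 - norm \<mu>)"
    using assms(1) by (simp add: suminf_geometric)
  finally show "norm (\<Sum>n. of_int (a n) * \<mu> ^ n) \<le> 1 / (1 - norm \<mu>)" .
qed

lemma sums_if_remainders_bounded:
  fixes \<mu> :: complex
  assumes "norm \<mu> < 1" and "\<And>n. norm (r n) \<le> B"
    and "\<And>n. z = (\<Sum>k<n. a k * \<mu> ^ k) + \<mu> ^ n * r n"
  shows "(\<lambda>n. a n * \<mu> ^ n) sums z"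
proof -
  have "(\<lambda>n. \<mu> ^ n * r n) \<longlonglongrightarrow> 0"
  proof (rule Lim_null_comparison)
    show "\<forall>\<^sub>F n in sequentially. norm (\<mu> ^ n * r n) \<le> norm \<mu> ^ n * B"
      using assms(2) by (intro always_eventually allI) (simp add: norm_mult norm_power mult_left_mono)
    show "(\<lambda>n. norm \<mu> ^ n * B) \<longlonglongrightarrow> 0"
      using assms(1) by (intro tendsto_mult_left_zero LIMSEQ_power_zero) auto
  qed
  then have "(\<lambda>n. z - \<mu> ^ n * r n) \<longlonglongrightarrow> z - 0"
    by (intro tendsto_diff tendsto_const)
  moreover have "z - \<mu> ^ n * r n = (\<Sum>k<n. a k * \<mu> ^ k)" for n
    using assms(3)[of n] by (simp add: algebra_simps)
  ultimately show ?thesis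
    by (simp add: sums_def)
qed

lemma has_digit_expansion_if_self_covering:
  assumes "norm \<mu> < 1" and "bounded S"
    and cover: "\<And>z. z \<in> S \<Longrightarrow> \<exists>d\<in>D. \<exists>z'\<in>S. z = of_int d + \<mu> * z'"
    and "z \<in> S"
  shows "has_digit_expansion D \<mu> z"
proof -
  obtain B where B: "\<And>z. z \<in> S \<Longrightarrow> norm z \<le> B"
    using \<open>bounded S\<close> by (auto simp: bounded_iff)
  obtain digit rest where step: "\<And>z. z \<in> S \<Longrightarrow> digit z \<in> D \<and> rest z \<in> S \<and> z = of_int (digit z) + \<mu> * rest z"
    using cover by metis
  define orbit where "orbit n = (rest ^^ n) z" for n
  define e where "e n = digit (orbit n)" for n
  have orbit: "orbit n \<in> S \<and> z = (\<Sum>k<n. of_int (e k) * \<mu> ^ k) + \<mu> ^ n * orbit n" for n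
  proof (induction n)
    case 0
    then show ?case using \<open>z \<in> S\<close> by (simp add: orbit_def)
  next
    case (Suc n)
    then have "orbit n \<in> S" by blast
    then have "orbit n = of_int (e n) + \<mu> * orbit (Suc n)" "orbit (Suc n) \<in> S"
      using step[of "orbit n"] by (simp_all add: orbit_def e_def)
    with Suc show ?case
      by (simp add: distrib_left mult_ac)
  qed
  have "(\<lambda>n. of_int (e n) * \<mu> ^ n) sums z"
  proof (rule sums_if_remainders_bounded[OF assms(1)])
    show "norm (orbit n) \<le> B" for n
      by (rule B[OF conjunct1[OF orbit]])
    show "z = (\<Sum>k<n. of_int (e k) * \<mu> ^ k) + \<mu> ^ n * orbit n" for n
      by (rule conjunct2[OF orbit])
  qed
  moreover have "e n \<in> D" for n
    using step orbit unfolding e_def by blast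
  ultimately show ?thesis
    unfolding has_digit_expansion_def by blast
qed

section \<open>Connectedness of the attractor\<close>

lemma attractor_eq_digit_expansions:
  assumes "norm \<mu> < 1"
  shows "attractor \<mu> = {z. has_digit_expansion {-1, 1} \<mu> z}"
proof (intro set_eqI iffI)
  fix z assume "z \<in> attractor \<mu>"
  then obtain a where a: "\<forall>n. a n \<in> {-1, 1}" and z: "z = (\<Sum>n. of_int (a n) * \<mu> ^ n)"
    unfolding attractor_def by blast
  have "\<bar>a n\<bar> \<le> 1" for n
    using a[rule_format, of n] by auto
  then have "summable (\<lambda>n. of_int (a n) * \<mu> ^ n)"
    by (rule digit_series_summable(1)[OF assms])
  with a z show "z \<in> {z. has_digit_expansion {-1, 1} \<mu> z}"
    unfolding has_digit_expansion_def using summable_sums by blast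
next
  fix z assume "z \<in> {z. has_digit_expansion {-1, 1} \<mu> z}"
  then show "z \<in> attractor \<mu>"
    unfolding has_digit_expansion_def attractor_def by (auto dest: sums_unique)
qed

lemma attractor_self_similar:
  assumes "norm \<mu> < 1"
  shows "attractor \<mu> = (\<lambda>z. \<mu> * z - 1) ` attractor \<mu> \<union> (\<lambda>z. \<mu> * z + 1) ` attractor \<mu>"
proof -
  have pieces: "\<mu> * z - 1 = of_int (-1) + \<mu> * z" "\<mu> * z + 1 = of_int 1 + \<mu> * z" for z
    by simp_all
  show ?thesis
    unfolding attractor_eq_digit_expansions[OF assms]
  proof (intro equalityI subsetI)
    fix z assume "z \<in> {z. has_digit_expansion {-1, 1} \<mu> z}"
    then obtain d z' where "d \<in> {-1, 1}" "has_digit_expansion {-1, 1} \<mu> z'" "z = of_int d + \<mu> * z'"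
      using has_digit_expansion_uncons by blast
    then show "z \<in> (\<lambda>z. \<mu> * z - 1) ` {z. has_digit_expansion {-1, 1} \<mu> z} \<union>
                   (\<lambda>z. \<mu> * z + 1) ` {z. has_digit_expansion {-1, 1} \<mu> z}"
      unfolding pieces by auto
  qed (auto simp only: pieces intro: has_digit_expansion_Cons)
qed

lemma attractor_nonempty:
  assumes "norm \<mu> < 1"
  shows "attractor \<mu> \<noteq> {}"
proof -
  have "has_digit_expansion {-1, 1} \<mu> (1 / (1 - \<mu>))"
    unfolding has_digit_expansion_def using geometric_sums[OF assms]
    by (intro exI[of _ "\<lambda>_. 1"]) simp
  then show ?thesis
    unfolding attractor_eq_digit_expansions[OF assms] by blast
qed

lemma attractor_subset_cball:
  assumes "norm \<mu> < 1"
  shows "attractor \<mu> \<subseteq> cball 0 (1 / (1 - norm \<mu>))"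
proof
  fix z assume "z \<in> attractor \<mu>"
  then obtain a where a: "\<forall>n. a n \<in> {-1, 1}" and z: "z = (\<Sum>n. of_int (a n) * \<mu> ^ n)"
    unfolding attractor_def by blast
  have "\<bar>a n\<bar> \<le> 1" for n
    using a[rule_format, of n] by auto
  then have "norm z \<le> 1 / (1 - norm \<mu>)"
    unfolding z by (rule digit_series_summable(2)[OF assms])
  then show "z \<in> cball 0 (1 / (1 - norm \<mu>))"
    by simp
qed

primrec attractor_approx :: "complex \<Rightarrow> nat \<Rightarrow> complex set" where
  "attractor_approx \<mu> 0 = cball 0 (1 / (1 - norm \<mu>))"
| "attractor_approx \<mu> (Suc n) =
     (\<lambda>z. \<mu> * z - 1) ` attractor_approx \<mu> n \<union> (\<lambda>z. \<mu> * z + 1) ` attractor_approx \<mu> n"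

lemma compact_attractor_approx: "compact (attractor_approx \<mu> n)"
proof (induction n)
  case (Suc n)
  have "compact ((\<lambda>z. \<mu> * z + c) ` attractor_approx \<mu> n)" for c
    using Suc by (intro compact_continuous_image continuous_intros)
  from this[of "-1"] this[of 1] show ?case
    by (simp add: compact_Un)
qed simp

lemma attractor_subset_approx:
  assumes "norm \<mu> < 1"
  shows "attractor \<mu> \<subseteq> attractor_approx \<mu> n"
proof (induction n)
  case 0
  then show ?case using attractor_subset_cball[OF assms] by simp
next
  case (Suc n)
  then show ?case
    by (subst attractor_self_similar[OF assms]) auto
qed

lemma decseq_attractor_approx:
  assumes "norm \<mu> < 1"
  shows "decseq (attractor_approx \<mu>)"
proof (rule decseq_SucI)
  fix n show "attractor_approx \<mu> (Suc n) \<subseteq> attractor_approx \<mu> n"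
  proof (induction n)
    case 0
    define R where "R = 1 / (1 - norm \<mu>)"
    have R: "norm \<mu> * R + 1 = R"
      using assms by (simp add: R_def field_simps)
    have "norm (\<mu> * z + c) \<le> R" if "norm z \<le> R" "norm c = 1" for z c :: complex
    proof -
      have "norm (\<mu> * z + c) \<le> norm \<mu> * norm z + 1"
        using norm_triangle_ineq[of "\<mu> * z" c] that by (simp add: norm_mult)
      also have "\<dots> \<le> norm \<mu> * R + 1"
        using that by (simp add: mult_left_mono)
      finally show ?thesis using R by simp
    qed
    from this[of _ "-1"] this[of _ 1] show ?case
      by (auto simp: R_def)
  qed auto
qed

lemma attractor_eq_Inter_approx:
  assumes "norm \<mu> < 1"
  shows "attractor \<mu> = (\<Inter>n. attractor_approx \<mu> n)"
proof
  show "attractor \<mu> \<subseteq> (\<Inter>n. attractor_approx \<mu> n)"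
    using attractor_subset_approx[OF assms] by blast
next
  define L where "L = (\<Inter>n. attractor_approx \<mu> n)"
  have dec: "decseq (attractor_approx \<mu>)"
    by (rule decseq_attractor_approx[OF assms])
  have image: "f ` L = (\<Inter>n. f ` attractor_approx \<mu> n)" if "continuous_on UNIV f" for f :: "complex \<Rightarrow> complex"
    unfolding L_def by (rule image_Inter_decseq_compact[OF that compact_attractor_approx dec])
  have "L = (\<Inter>n. attractor_approx \<mu> (Suc n))"
    unfolding L_def using decseq_SucD[OF dec] by blast
  also have "\<dots> = (\<Inter>n. (\<lambda>z. \<mu> * z - 1) ` attractor_approx \<mu> n) \<union> (\<Inter>n. (\<lambda>z. \<mu> * z + 1) ` attractor_approx \<mu> n)"
    unfolding attractor_approx.simps
    by (rule Inter_Un_decseq) (auto intro!: decseq_SucI image_mono decseq_SucD[OF dec])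
  also have "\<dots> = (\<lambda>z. \<mu> * z - 1) ` L \<union> (\<lambda>z. \<mu> * z + 1) ` L"
    by (simp add: image continuous_intros)
  finally have L_eq: "L = (\<lambda>z. \<mu> * z - 1) ` L \<union> (\<lambda>z. \<mu> * z + 1) ` L" .
  have cover: "\<exists>d\<in>{-1, 1}. \<exists>z'\<in>L. z = of_int d + \<mu> * z'" if "z \<in> L" for z
  proof -
    from that obtain z' where z': "z' \<in> L" "z = \<mu> * z' - 1 \<or> z = \<mu> * z' + 1"
      using L_eq by blast
    then have "z = of_int (-1) + \<mu> * z' \<or> z = of_int 1 + \<mu> * z'"
      by auto
    then show ?thesis
      using z'(1) by blast
  qed
  have "L \<subseteq> attractor_approx \<mu> 0"
    unfolding L_def by blast
  then have "bounded L"
    by (rule bounded_subset[rotated]) simp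
  then show "L \<subseteq> attractor \<mu>"
    unfolding attractor_eq_digit_expansions[OF assms]
    using has_digit_expansion_if_self_covering[OF assms _ cover] by blast
qed

lemma compact_attractor:
  assumes "norm \<mu> < 1"
  shows "compact (attractor \<mu>)"
  unfolding attractor_eq_Inter_approx[OF assms]
  by (rule compact_Inter) (auto intro: compact_attractor_approx)

lemma sums_half_difference:
  fixes \<mu> :: complex
  assumes "(\<lambda>n. of_int (a n) * \<mu> ^ n) sums \<alpha>" and "(\<lambda>n. of_int (b n) * \<mu> ^ n) sums \<beta>"
    and "\<And>n. 2 * c n = a n - b n"
  shows "(\<lambda>n. of_int (c n) * \<mu> ^ n) sums ((\<alpha> - \<beta>) / 2)"
proof -
  have "(\<lambda>n. (of_int (a n) * \<mu> ^ n - of_int (b n) * \<mu> ^ n) / 2) sums ((\<alpha> - \<beta>) / 2)"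
    by (intro sums_divide sums_diff assms)
  moreover have "(of_int (a n) * \<mu> ^ n - of_int (b n) * \<mu> ^ n) / 2 = of_int (c n) * \<mu> ^ n" for n
  proof -
    have "of_int (a n) - of_int (b n) = (2 * of_int (c n) :: complex)"
      using arg_cong[OF assms(3)[of n], of "of_int :: int \<Rightarrow> complex"] by simp
    then show ?thesis
      by (simp add: left_diff_distrib[symmetric])
  qed
  ultimately show ?thesis
    by simp
qed

lemma has_digit_expansion_iff_half_difference:
  assumes "norm \<mu> < 1"
  shows "has_digit_expansion {-1, 0, 1} \<mu> z \<longleftrightarrow> (\<exists>\<alpha>\<in>attractor \<mu>. \<exists>\<beta>\<in>attractor \<mu>. z = (\<alpha> - \<beta>) / 2)"
proof
  assume "has_digit_expansion {-1, 0, 1} \<mu> z"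
  then obtain c where c: "\<forall>n. c n \<in> {-1, 0, 1}" and sums: "(\<lambda>n. of_int (c n) * \<mu> ^ n) sums z"
    unfolding has_digit_expansion_def by blast
  define a where "a n = (if c n = -1 then -1 else 1 :: int)" for n
  define b where "b n = (if c n = 1 then -1 else 1 :: int)" for n
  have ab: "a n \<in> {-1, 1}" "b n \<in> {-1, 1}" "2 * c n = a n - b n" for n
    using c[rule_format, of n] by (auto simp: a_def b_def)
  have "\<bar>a n\<bar> \<le> 1" "\<bar>b n\<bar> \<le> 1" for n
    using ab(1,2)[of n] by auto
  then have a: "(\<lambda>n. of_int (a n) * \<mu> ^ n) sums (\<Sum>n. of_int (a n) * \<mu> ^ n)"
    and b: "(\<lambda>n. of_int (b n) * \<mu> ^ n) sums (\<Sum>n. of_int (b n) * \<mu> ^ n)"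
    by (simp_all add: summable_sums digit_series_summable(1)[OF assms])
  have "(\<Sum>n. of_int (a n) * \<mu> ^ n) \<in> attractor \<mu>" "(\<Sum>n. of_int (b n) * \<mu> ^ n) \<in> attractor \<mu>"
    unfolding attractor_eq_digit_expansions[OF assms] has_digit_expansion_def using ab a b by blast+
  moreover have "z = ((\<Sum>n. of_int (a n) * \<mu> ^ n) - (\<Sum>n. of_int (b n) * \<mu> ^ n)) / 2"
    using sums_unique2[OF sums sums_half_difference[OF a b ab(3)]] .
  ultimately show "\<exists>\<alpha>\<in>attractor \<mu>. \<exists>\<beta>\<in>attractor \<mu>. z = (\<alpha> - \<beta>) / 2"
    by blast
next
  assume "\<exists>\<alpha>\<in>attractor \<mu>. \<exists>\<beta>\<in>attractor \<mu>. z = (\<alpha> - \<beta>) / 2"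
  then obtain a b \<alpha> \<beta> where a: "\<forall>n. a n \<in> {-1, 1}" "(\<lambda>n. of_int (a n) * \<mu> ^ n) sums \<alpha>"
    and b: "\<forall>n. b n \<in> {-1, 1}" "(\<lambda>n. of_int (b n) * \<mu> ^ n) sums \<beta>" and z: "z = (\<alpha> - \<beta>) / 2"
    unfolding attractor_eq_digit_expansions[OF assms] has_digit_expansion_def by blast
  define c where "c n = (a n - b n) div 2" for n
  have "2 * c n = a n - b n" "c n \<in> {-1, 0, 1}" for n
    using a(1)[rule_format, of n] b(1)[rule_format, of n] by (auto simp: c_def)
  then show "has_digit_expansion {-1, 0, 1} \<mu> z"
    unfolding has_digit_expansion_def z using sums_half_difference[OF a(2) b(2)] by blast
qed

lemma attractor_pieces_meet_iff:
  assumes "norm \<mu> < 1"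
  shows "(\<lambda>z. \<mu> * z - 1) ` attractor \<mu> \<inter> (\<lambda>z. \<mu> * z + 1) ` attractor \<mu> \<noteq> {} \<longleftrightarrow>
    (\<exists>z. has_digit_expansion {-1, 0, 1} \<mu> z \<and> \<mu> * z = 1)"
proof -
  have "\<mu> * \<alpha> - 1 = \<mu> * \<beta> + 1 \<longleftrightarrow> \<mu> * ((\<alpha> - \<beta>) / 2) = 1" for \<alpha> \<beta>
    by (auto simp: field_simps)
  then show ?thesis
    unfolding has_digit_expansion_iff_half_difference[OF assms] by blast
qed

lemma connected_attractor_approx:
  assumes "norm \<mu> < 1"
    and meet: "(\<lambda>z. \<mu> * z - 1) ` attractor \<mu> \<inter> (\<lambda>z. \<mu> * z + 1) ` attractor \<mu> \<noteq> {}"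
  shows "connected (attractor_approx \<mu> n)"
proof (induction n)
  case (Suc n)
  have "connected ((\<lambda>z. \<mu> * z - 1) ` attractor_approx \<mu> n)" "connected ((\<lambda>z. \<mu> * z + 1) ` attractor_approx \<mu> n)"
    by (intro connected_continuous_image continuous_intros Suc)+
  moreover have "(\<lambda>z. \<mu> * z - 1) ` attractor_approx \<mu> n \<inter> (\<lambda>z. \<mu> * z + 1) ` attractor_approx \<mu> n \<noteq> {}"
    using meet attractor_subset_approx[OF assms(1), of n] by blast
  ultimately show ?case
    by (simp add: connected_Un)
qed simp

lemma connected_attractor_iff:
  assumes "norm \<mu> < 1"
  shows "connected (attractor \<mu>) \<longleftrightarrow> (\<exists>z. has_digit_expansion {-1, 0, 1} \<mu> z \<and> \<mu> * z = 1)"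
  unfolding attractor_pieces_meet_iff[OF assms, symmetric]
proof
  let ?P = "(\<lambda>z. \<mu> * z - 1) ` attractor \<mu>" and ?Q = "(\<lambda>z. \<mu> * z + 1) ` attractor \<mu>"
  assume conn: "connected (attractor \<mu>)"
  have closed: "closed ?P" "closed ?Q"
    using compact_attractor[OF assms]
    by (intro compact_imp_closed compact_continuous_image continuous_intros; assumption)+
  have nonempty: "?P \<noteq> {}" "?Q \<noteq> {}"
    using attractor_nonempty[OF assms] by simp_all
  show "?P \<inter> ?Q \<noteq> {}"
  proof
    assume "?P \<inter> ?Q = {}"
    then have "\<exists>A B. closed A \<and> closed B \<and> A \<noteq> {} \<and> B \<noteq> {} \<and> A \<union> B = attractor \<mu> \<and> A \<inter> B = {}"
      by (intro exI[of _ ?P] exI[of _ ?Q] conjI closed nonempty attractor_self_similar[OF assms, symmetric])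
    with conn show False
      using connected_closed_set[OF compact_imp_closed[OF compact_attractor[OF assms]]] by blast
  qed
next
  assume "(\<lambda>z. \<mu> * z - 1) ` attractor \<mu> \<inter> (\<lambda>z. \<mu> * z + 1) ` attractor \<mu> \<noteq> {}"
  then have "connected (\<Inter>n. attractor_approx \<mu> n)"
    using compact_attractor_approx connected_attractor_approx[OF assms] decseqD[OF decseq_attractor_approx[OF assms]]
    by (intro connected_nest) auto
  then show "connected (attractor \<mu>)"
    by (simp add: attractor_eq_Inter_approx[OF assms])
qed

lemma connLocus_iff:
  "\<mu> \<in> connLocus \<longleftrightarrow> norm \<mu> < 1 \<and> (\<exists>z. has_digit_expansion {-1, 0, 1} \<mu> z \<and> \<mu> * z = 1)"
  unfolding connLocus_def using connected_attractor_iff by blast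

section \<open>A trap for the expansion map\<close>

lemma regionH_bounds:
  assumes "\<mu> \<in> regionH"
  shows "0 < Re \<mu>" "1/2 \<le> Im \<mu>" "1 + 2 * Re \<mu> \<le> 3 * (norm \<mu>)\<^sup>2" "(norm \<mu>)\<^sup>2 < 1/2"
    and "norm \<mu> < 1"
proof -
  have x: "0 < Re \<mu>" and y: "0 < Im \<mu>" and inner: "norm \<mu> < 1 / sqrt 2"
    and outer: "2/3 \<le> norm (\<mu> - 1/3)"
    using assms unfolding regionH_def by (auto simp: dist_norm norm_minus_commute)
  show "0 < Re \<mu>" by (fact x)
  have "1 / sqrt 2 < (1::real)"
    by (simp add: divide_less_eq)
  with inner show "norm \<mu> < 1" by linarith
  have "(norm \<mu>)\<^sup>2 < (1 / sqrt 2)\<^sup>2"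
    using inner by (intro power_strict_mono) auto
  then show r: "(norm \<mu>)\<^sup>2 < 1/2"
    by (simp add: power_divide)
  have "(2/3)\<^sup>2 \<le> (norm (\<mu> - 1/3))\<^sup>2"
    using outer by (intro power_mono) auto
  also have "\<dots> = (Re \<mu> - 1/3)\<^sup>2 + (Im \<mu>)\<^sup>2"
    by (simp add: cmod_power2)
  finally show c: "1 + 2 * Re \<mu> \<le> 3 * (norm \<mu>)\<^sup>2"
    unfolding cmod_power2 by (simp add: power2_eq_square algebra_simps)
  have "Re \<mu> < 1/4"
    using c r by linarith
  then have "Re \<mu> * Re \<mu> \<le> Re \<mu> * (2/3)"
    using x by (intro mult_left_mono) auto
  then have "1/4 \<le> Im \<mu> * Im \<mu>"
    using c unfolding cmod_power2 unfolding power2_eq_square by argo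
  then have "(1/2)\<^sup>2 \<le> (Im \<mu>)\<^sup>2"
    by (simp add: power2_eq_square)
  then show "1/2 \<le> Im \<mu>"
    by (rule power2_le_imp_le) (use y in auto)
qed

lemma complex_power2_eq:
  fixes \<mu> :: complex
  shows "\<mu>\<^sup>2 = of_real (2 * Re \<mu>) * \<mu> - of_real ((norm \<mu>)\<^sup>2)"
  unfolding cmod_power2 by (simp add: complex_eq_iff power2_eq_square algebra_simps)

lemma parallelogram_coordinates_step:
  fixes \<mu> :: complex
  assumes "v * (norm \<mu>)\<^sup>2 = d - s" and "u + 2 * Re \<mu> * v = t"
  shows "of_real s + of_real t * \<mu> = of_real d + \<mu> * (of_real u + of_real v * \<mu>)"
proof -
  have "\<mu> * (of_real u + of_real v * \<mu>) = of_real u * \<mu> + of_real v * \<mu>\<^sup>2"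
    by (simp add: power2_eq_square algebra_simps)
  also have "\<dots> = of_real (u + 2 * Re \<mu> * v) * \<mu> - of_real (v * (norm \<mu>)\<^sup>2)"
    unfolding complex_power2_eq by (simp add: algebra_simps)
  also have "\<dots> = of_real t * \<mu> + of_real s - of_real d"
    using assms by simp
  finally show ?thesis
    by simp
qed

lemma exists_digit_near:
  fixes s :: real
  assumes "\<bar>s\<bar> \<le> 3/2"
  shows "\<exists>d\<in>{-1, 0, 1::int}. \<bar>s - of_int d\<bar> \<le> 1/2"
proof
  let ?d = "if s < -1/2 then -1 else if s \<le> 1/2 then 0 else 1 :: int"
  show "\<bar>s - of_int ?d\<bar> \<le> 1/2"
    using assms by (auto simp: abs_if)
qed auto

text \<open>
  In coordinates \<open>z = s + t \<mu>\<close>, the relation \<open>\<mu>\<^sup>2 = 2 Re \<mu> \<mu> - |\<mu>|\<^sup>2\<close> turns the expansion step into an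
  affine map of \<open>(s, t)\<close>; the bounds below are invariant once the digit is chosen with \<open>|s - d| \<le> 1/2\<close>,
  which is possible because \<open>1 + 2 Re \<mu> \<le> 3 |\<mu>|\<^sup>2\<close>, i.e. because \<open>\<mu>\<close> lies outside the disc of radius \<open>2/3\<close> about \<open>1/3\<close>.
\<close>
definition trap_parallelogram :: "complex \<Rightarrow> complex set" where
  "trap_parallelogram \<mu> = {of_real s + of_real t * \<mu> | s t.
     \<bar>s\<bar> \<le> (1 + 2 * Re \<mu>) / (2 * (norm \<mu>)\<^sup>2) \<and> \<bar>t\<bar> \<le> 1 / (2 * (norm \<mu>)\<^sup>2)}"

lemma bounded_trap_parallelogram: "bounded (trap_parallelogram \<mu>)"
proof -
  define a where "a = (1 + 2 * Re \<mu>) / (2 * (norm \<mu>)\<^sup>2)"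
  define b where "b = 1 / (2 * (norm \<mu>)\<^sup>2)"
  have "norm z \<le> a + b * norm \<mu>" if zT: "z \<in> trap_parallelogram \<mu>" for z
  proof -
    obtain s t where z: "z = of_real s + of_real t * \<mu>" and "\<bar>s\<bar> \<le> a" "\<bar>t\<bar> \<le> b"
      using zT unfolding trap_parallelogram_def a_def b_def by blast
    then have "norm (of_real s :: complex) + norm (of_real t * \<mu>) \<le> a + b * norm \<mu>"
      by (auto simp: norm_mult intro!: add_mono mult_right_mono)
    then show ?thesis
      unfolding z using norm_triangle_ineq order_trans by blast
  qed
  then show ?thesis
    unfolding bounded_iff by blast
qed

lemma trap_parallelogram_self_covering:
  assumes "0 \<le> Re \<mu>" and "1 + 2 * Re \<mu> \<le> 3 * (norm \<mu>)\<^sup>2" and "z \<in> trap_parallelogram \<mu>"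
  shows "\<exists>d\<in>{-1, 0, 1}. \<exists>z'\<in>trap_parallelogram \<mu>. z = of_int d + \<mu> * z'"
proof -
  define x where "x = Re \<mu>"
  define \<rho> where "\<rho> = (norm \<mu>)\<^sup>2"
  have \<rho>: "0 < \<rho>"
    using assms(1,2) unfolding \<rho>_def by linarith
  obtain s t where z: "z = of_real s + of_real t * \<mu>"
    and s: "\<bar>s\<bar> \<le> (1 + 2 * x) / (2 * \<rho>)" and t: "\<bar>t\<bar> \<le> 1 / (2 * \<rho>)"
    using assms(3) unfolding trap_parallelogram_def x_def \<rho>_def by blast
  have "(1 + 2 * x) / (2 * \<rho>) \<le> 3/2"
    using assms(2) \<rho> by (simp add: x_def \<rho>_def field_simps)
  then have "\<bar>s\<bar> \<le> 3/2"
    using s by linarith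
  then obtain d where d: "d \<in> {-1, 0, 1}" "\<bar>s - of_int d\<bar> \<le> 1/2"
    using exists_digit_near by blast
  define v where "v = (of_int d - s) / \<rho>"
  define u where "u = t - 2 * x * v"
  have "\<bar>v\<bar> = \<bar>s - of_int d\<bar> / \<rho>"
    using \<rho> by (simp add: v_def abs_divide abs_minus_commute)
  also have "\<dots> \<le> (1/2) / \<rho>"
    using d(2) \<rho> by (intro divide_right_mono) auto
  finally have v: "\<bar>v\<bar> \<le> 1 / (2 * \<rho>)"
    by simp
  have "\<bar>u\<bar> \<le> \<bar>t\<bar> + 2 * x * \<bar>v\<bar>"
    using assms(1) abs_triangle_ineq4[of t "2 * x * v"] by (simp add: u_def x_def abs_mult)
  also have "\<dots> \<le> 1 / (2 * \<rho>) + 2 * x * (1 / (2 * \<rho>))"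
    using t v assms(1) by (intro add_mono mult_left_mono) (auto simp: x_def)
  also have "\<dots> = (1 + 2 * x) / (2 * \<rho>)"
    using \<rho> by (simp add: field_simps)
  finally have u: "\<bar>u\<bar> \<le> (1 + 2 * x) / (2 * \<rho>)" .
  have "v * \<rho> = of_int d - s" "u + 2 * x * v = t"
    using \<rho> by (simp_all add: u_def v_def)
  then have "of_real s + of_real t * \<mu> = of_real (of_int d) + \<mu> * (of_real u + of_real v * \<mu>)"
    unfolding x_def \<rho>_def by (rule parallelogram_coordinates_step)
  then have "z = of_int d + \<mu> * (of_real u + of_real v * \<mu>)"
    by (simp add: z)
  moreover have "of_real u + of_real v * \<mu> \<in> trap_parallelogram \<mu>"
    using u v unfolding trap_parallelogram_def x_def \<rho>_def by blast
  ultimately show ?thesis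
    using d(1) by blast
qed

lemma ball_subset_trap_parallelogram:
  assumes "0 \<le> Re \<mu>" and "1/2 \<le> Im \<mu>" and "(norm \<mu>)\<^sup>2 \<le> 1/2"
  shows "ball 0 (1/4) \<subseteq> trap_parallelogram \<mu>"
proof
  fix w :: complex assume "w \<in> ball 0 (1/4)"
  then have w: "\<bar>Re w\<bar> \<le> 1/4" "\<bar>Im w\<bar> \<le> 1/4"
    using abs_Re_le_cmod[of w] abs_Im_le_cmod[of w] by auto
  define t where "t = Im w / Im \<mu>"
  define s where "s = Re w - t * Re \<mu>"
  have "\<mu> \<noteq> 0"
    using assms(2) by auto
  then have b: "1 \<le> 1 / (2 * (norm \<mu>)\<^sup>2)"
    using assms(3) by (simp add: field_simps)
  have ab: "1 / (2 * (norm \<mu>)\<^sup>2) \<le> (1 + 2 * Re \<mu>) / (2 * (norm \<mu>)\<^sup>2)"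
    using assms(1) by (simp add: divide_right_mono)
  have "\<bar>t\<bar> = \<bar>Im w\<bar> / Im \<mu>"
    using assms(2) by (simp add: t_def abs_divide)
  also have "\<dots> \<le> (1/4) / (1/2)"
    using w assms(2) by (intro frac_le) auto
  finally have t: "\<bar>t\<bar> \<le> 1/2"
    by simp
  have "norm \<mu> \<le> 1"
    by (rule power2_le_imp_le) (use assms(3) in auto)
  then have "Re \<mu> \<le> 1"
    using abs_Re_le_cmod[of \<mu>] by linarith
  have "\<bar>s\<bar> \<le> \<bar>Re w\<bar> + \<bar>t\<bar> * Re \<mu>"
    using abs_triangle_ineq4[of "Re w" "t * Re \<mu>"] assms(1) by (simp add: s_def abs_mult)
  also have "\<dots> \<le> 1/4 + 1/2 * 1"
    using w t \<open>Re \<mu> \<le> 1\<close> assms(1) by (intro add_mono mult_mono) auto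
  finally have "\<bar>s\<bar> \<le> (1 + 2 * Re \<mu>) / (2 * (norm \<mu>)\<^sup>2)" "\<bar>t\<bar> \<le> 1 / (2 * (norm \<mu>)\<^sup>2)"
    using b ab t by linarith+
  moreover have "w = of_real s + of_real t * \<mu>"
    using assms(2) by (simp add: complex_eq_iff s_def t_def)
  ultimately show "w \<in> trap_parallelogram \<mu>"
    unfolding trap_parallelogram_def by blast
qed

lemma regionH_has_digit_expansion:
  assumes "\<mu> \<in> regionH" and "norm w < 1/4"
  shows "has_digit_expansion {-1, 0, 1} \<mu> w"
proof (rule has_digit_expansion_if_self_covering)
  note H = regionH_bounds[OF assms(1)]
  show "norm \<mu> < 1"
    by (fact H(5))
  show "bounded (trap_parallelogram \<mu>)"
    by (rule bounded_trap_parallelogram)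
  show "\<exists>d\<in>{-1, 0, 1}. \<exists>z'\<in>trap_parallelogram \<mu>. z = of_int d + \<mu> * z'"
    if "z \<in> trap_parallelogram \<mu>" for z
    using H(1,3) that by (intro trap_parallelogram_self_covering) auto
  show "w \<in> trap_parallelogram \<mu>"
    using ball_subset_trap_parallelogram[of \<mu>] H assms(2) by auto
qed

section \<open>Roots of truncations\<close>

lemma connLocus_if_truncation_close:
  assumes "\<mu> \<in> regionH" and "\<And>n. n < N \<Longrightarrow> c n \<in> {-1, 0, 1}"
    and close: "norm (1 - (\<Sum>n<N. of_int (c n) * \<mu> ^ Suc n)) < norm \<mu> ^ Suc N / 4"
  shows "\<mu> \<in> connLocus"
proof -
  have "\<mu> \<noteq> 0"
    using regionH_bounds(1)[OF assms(1)] by auto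
  define q where "q = (\<Sum>n<N. of_int (c n) * \<mu> ^ n)"
  define w where "w = (1 - \<mu> * q) / \<mu> ^ Suc N"
  have \<mu>q: "\<mu> * q = (\<Sum>n<N. of_int (c n) * \<mu> ^ Suc n)"
    by (simp add: q_def sum_distrib_left mult_ac)
  have "norm w = norm (1 - \<mu> * q) / norm \<mu> ^ Suc N"
    by (simp add: w_def norm_divide norm_power del: power_Suc)
  also have "\<dots> < 1/4"
    using close \<open>\<mu> \<noteq> 0\<close> by (simp add: \<mu>q divide_less_eq mult.commute)
  finally have "has_digit_expansion {-1, 0, 1} \<mu> w"
    by (rule regionH_has_digit_expansion[OF assms(1)])
  with assms(2) have "has_digit_expansion {-1, 0, 1} \<mu> (q + \<mu> ^ N * w)"
    unfolding q_def by (rule has_digit_expansion_prepend)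
  moreover have "\<mu> * (q + \<mu> ^ N * w) = 1"
    using \<open>\<mu> \<noteq> 0\<close> by (simp add: w_def distrib_left)
  ultimately show ?thesis
    using regionH_bounds(5)[OF assms(1)] connLocus_iff by blast
qed

lemma truncation_root_in_interior_connLocus:
  assumes "\<mu> \<in> interior regionH" and "\<And>n. c n \<in> {-1, 0, 1}"
    and "(\<Sum>n<N. of_int (c n) * \<mu> ^ Suc n) = 1"
  shows "\<mu> \<in> interior connLocus"
proof -
  define U where "U = interior regionH \<inter> {z. norm (1 - (\<Sum>n<N. of_int (c n) * z ^ Suc n)) < norm z ^ Suc N / 4}"
  have "open U"
    unfolding U_def by (intro open_Int open_interior open_Collect_less continuous_intros) auto
  moreover have "U \<subseteq> connLocus"
  proof
    fix z assume "z \<in> U"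
    then show "z \<in> connLocus"
      using interior_subset[of regionH] assms(2) unfolding U_def
      by (intro connLocus_if_truncation_close[of z N c]) auto
  qed
  moreover have "\<mu> \<noteq> 0"
    using regionH_bounds(1) assms(1) interior_subset by fastforce
  then have "\<mu> \<in> U"
    using assms(1,3) by (simp add: U_def)
  ultimately show ?thesis
    by (meson interior_maximal subsetD)
qed

lemma not_constant_on_ball:
  assumes "open S" and "connected S" and "g holomorphic_on S" and "ball z r \<subseteq> S" and "0 < r"
    and "w \<in> S" and "g w \<noteq> g z"
  shows "\<not> g constant_on ball z r"
proof
  assume "g constant_on ball z r"
  then obtain y where y: "\<And>x. x \<in> ball z r \<Longrightarrow> g x = y"
    unfolding constant_on_def by blast
  have on_ball: "g x = g z" if "x \<in> ball z r" for x
    using y[OF that] y[of z] \<open>0 < r\<close> by simp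
  have "g w = g z"
    by (rule analytic_continuation_open[of "ball z r" S g "\<lambda>_. g z"])
      (use assms in \<open>auto intro: on_ball\<close>)
  with \<open>g w \<noteq> g z\<close> show False
    by contradiction
qed

lemma Hurwitz_zeros_approach:
  fixes F :: "nat \<Rightarrow> complex \<Rightarrow> complex"
  assumes S: "open S" "connected S" and holF: "\<And>n. F n holomorphic_on S" and holg: "g holomorphic_on S"
    and lim: "\<And>K. compact K \<Longrightarrow> K \<subseteq> S \<Longrightarrow> uniform_limit K F g sequentially"
    and "z0 \<in> S" "g z0 = 0" "w \<in> S" "g w \<noteq> 0" "0 < \<epsilon>"
  shows "\<exists>n. \<exists>z\<in>ball z0 \<epsilon>. F n z = 0"
proof (rule ccontr)
  assume no_zeros: "\<not> ?thesis"
  obtain r where r: "0 < r" "ball z0 r \<subseteq> S"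
    using S(1) \<open>z0 \<in> S\<close> openE by blast
  define B where "B = ball z0 (min r \<epsilon>)"
  have B: "B \<subseteq> S" "B \<subseteq> ball z0 \<epsilon>" "z0 \<in> B"
    using r \<open>0 < \<epsilon>\<close> by (auto simp: B_def)
  have nonconstant: "\<not> g constant_on B"
    unfolding B_def using S holg B(1) r(1) \<open>0 < \<epsilon>\<close> \<open>w \<in> S\<close> \<open>g z0 = 0\<close> \<open>g w \<noteq> 0\<close>
    by (intro not_constant_on_ball) (auto simp: B_def)
  have "g z0 \<noteq> 0"
  proof (rule Hurwitz_no_zeros[of B F g])
    show "open B" "connected B"
      by (simp_all add: B_def)
    show "F n holomorphic_on B" for n
      using holF B(1) by (rule holomorphic_on_subset)
    show "g holomorphic_on B"
      using holg B(1) by (rule holomorphic_on_subset)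
    show "uniform_limit K F g sequentially" if "compact K" "K \<subseteq> B" for K
      using that B(1) by (intro lim) auto
    show "F n z \<noteq> 0" if "z \<in> B" for n z
      using that B(2) no_zeros by blast
  qed (fact nonconstant B(3))+
  with \<open>g z0 = 0\<close> show False
    by contradiction
qed

lemma uniform_limit_truncations:
  fixes c :: "nat \<Rightarrow> int"
  assumes "0 \<le> \<rho>" and "\<rho> < 1" and "\<And>n. \<bar>c n\<bar> \<le> 1"
  shows "uniform_limit (cball (0::complex) \<rho>) (\<lambda>N x. \<Sum>n<N. of_int (c n) * x ^ Suc n)
           (\<lambda>x. \<Sum>n. of_int (c n) * x ^ Suc n) sequentially"
proof (rule Weierstrass_m_test)
  show "norm (of_int (c n) * x ^ Suc n) \<le> \<rho> ^ Suc n" if "x \<in> cball 0 \<rho>" for n and x :: complex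
  proof -
    have "norm (of_int (c n) :: complex) \<le> 1"
      using assms(3)[of n] by (simp only: norm_of_int)
    moreover have "norm x ^ Suc n \<le> \<rho> ^ Suc n"
      using that by (intro power_mono) auto
    ultimately have "norm (of_int (c n) :: complex) * norm x ^ Suc n \<le> 1 * \<rho> ^ Suc n"
      by (intro mult_mono) auto
    then show ?thesis
      by (simp add: norm_mult norm_power del: power_Suc)
  qed
  show "summable (\<lambda>n. \<rho> ^ Suc n)"
    using summable_mult[OF summable_geometric[of \<rho>], of \<rho>] assms(1,2) by simp
qed

lemma truncation_roots_approach:
  fixes l :: complex and c :: "nat \<Rightarrow> int"
  assumes "norm l < 1" and "\<And>n. \<bar>c n\<bar> \<le> 1" and "(\<lambda>n. of_int (c n) * l ^ Suc n) sums 1" and "0 < \<epsilon>"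
  shows "\<exists>N. \<exists>\<mu>\<in>ball l \<epsilon>. (\<Sum>n<N. of_int (c n) * \<mu> ^ Suc n) = 1"
proof -
  define \<rho> where "\<rho> = (1 + norm l) / 2"
  have "norm l < \<rho>" "\<rho> < 1"
    using assms(1) by (simp_all add: \<rho>_def)
  moreover have "0 < \<rho>"
    using \<open>norm l < \<rho>\<close> norm_ge_zero[of l] by linarith
  ultimately have \<rho>: "0 \<le> \<rho>" "\<rho> < 1" "l \<in> ball 0 \<rho>" "0 \<in> ball 0 \<rho>"
    by auto
  define F where "F N x = 1 - (\<Sum>n<N. of_int (c n) * x ^ Suc n)" for N and x :: complex
  define g where "g x = 1 - (\<Sum>n. of_int (c n) * x ^ Suc n)" for x :: complex
  have lim: "uniform_limit (cball 0 \<rho>) F g sequentially"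
    unfolding F_def g_def
    by (intro uniform_limit_intros uniform_limit_truncations \<rho>(1,2) assms(2))
  have holF: "F N holomorphic_on ball 0 \<rho>" for N
    unfolding F_def by (intro holomorphic_intros)
  have "\<forall>\<^sub>F N in sequentially. continuous_on (cball 0 \<rho>) (F N) \<and> F N holomorphic_on ball 0 \<rho>"
    unfolding F_def by (intro always_eventually allI conjI continuous_intros holomorphic_intros)
  then have holg: "g holomorphic_on ball 0 \<rho>"
    by (rule holomorphic_uniform_limit[OF _ lim]) simp_all
  have "\<exists>N. \<exists>\<mu>\<in>ball l \<epsilon>. F N \<mu> = 0"
  proof (rule Hurwitz_zeros_approach[OF open_ball connected_ball holF holg _ \<rho>(3) _ \<rho>(4) _ assms(4)])
    show "uniform_limit K F g sequentially" if "compact K" "K \<subseteq> ball 0 \<rho>" for K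
      using that by (intro uniform_limit_on_subset[OF lim]) auto
    show "g l = 0"
      using sums_unique[OF assms(3)] by (simp add: g_def)
    show "g 0 \<noteq> 0"
      by (simp add: g_def)
  qed
  then show ?thesis
    by (simp add: F_def)
qed

theorem mainTheorem1:
  shows "connLocus \<inter> interior regionH \<subseteq> closure (interior connLocus)"
proof
  fix l assume "l \<in> connLocus \<inter> interior regionH"
  then have "l \<in> connLocus" and l: "l \<in> interior regionH"
    by auto
  then obtain z c where "norm l < 1" and c: "\<forall>n. c n \<in> {-1, 0, 1}"
    and "(\<lambda>n. of_int (c n) * l ^ n) sums z" and "l * z = 1"
    unfolding connLocus_iff has_digit_expansion_def by blast
  then have sums: "(\<lambda>n. of_int (c n) * l ^ Suc n) sums 1"
    using sums_mult[of _ z l] by (simp add: mult_ac)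
  have digits: "\<bar>c n\<bar> \<le> 1" for n
    using c[rule_format, of n] by auto
  show "l \<in> closure (interior connLocus)"
    unfolding closure_approachable
  proof (intro allI impI)
    fix \<epsilon> :: real assume "0 < \<epsilon>"
    obtain r where "0 < r" "ball l r \<subseteq> interior regionH"
      using l open_interior openE by blast
    then obtain N \<mu> where \<mu>: "\<mu> \<in> ball l (min \<epsilon> r)" "(\<Sum>n<N. of_int (c n) * \<mu> ^ Suc n) = 1"
      using truncation_roots_approach[OF \<open>norm l < 1\<close> digits sums, of "min \<epsilon> r"] \<open>0 < \<epsilon>\<close> by auto
    then have "\<mu> \<in> interior connLocus"
      using \<open>ball l r \<subseteq> interior regionH\<close> c by (intro truncation_root_in_interior_connLocus) auto
    then show "\<exists>y\<in>interior connLocus. dist y l < \<epsilon>"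
      using \<mu>(1) by (auto simp: dist_commute)
  qed
qed

end
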